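(* Let $k$ be an algebraically closed field of characteristic $0$ and $d\ge3$. For each integer $m\ge1$ let $V_m$ have basis $v_1,\dots,v_m$ with symmetric $d$-linear form $\Theta_d(v_{i_1},\dots,v_{i_d})=1$ if $i_1+\dots+i_d=(d-1)m+1$ and $0$ otherwise, let $\mathcal{L}(m,d)=\{L\in\mathfrak{gl}(V_m):\sum_{i=1}^d\Theta_d(u_1,\dots,L(u_i),\dots,u_d)=0\ \forall u_j\in V_m\}$, and let $D_m(v_i)=(m-1-d(m-i))v_i$. For $n\ge2$ let $\iota:V_n\to V_{n+1}$, $\iota(v_i)=v_i$, $\pi:V_{n+1}\to V_n$, $\pi(v_i)=v_{i-1}$ (with $v_0=0$), and $\rho(f)=\iota\circ f\circ\pi$. Then for every $n\ge2$, $\mathcal{L}(n+1,d)=\rho(\mathcal{L}(n,d))\oplus kD_{n+1}$ and $\dim_k\mathcal{L}(n,d)=n-1$. *)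

theory Defs
  imports "HOL-Computational_Algebra.Polynomial" "HOL-Library.FuncSet" "HOL-Library.Function_Algebras"
begin

text \<open>V_m is modelled as the functions nat => 'a supported on {1..m}
  (coordinates w.r.t. the basis v_1..v_m); gl(V_m) as m x m matrices
  nat => nat => 'a supported on {1..m} x {1..m} (column j = image of v_j).\<close>

definition Vm :: "nat \<Rightarrow> (nat \<Rightarrow> 'a::field) set" where
  "Vm m = {u. \<forall>i. i \<notin> {1..m} \<longrightarrow> u i = 0}"

definition glm :: "nat \<Rightarrow> (nat \<Rightarrow> nat \<Rightarrow> 'a::field) set" where
  "glm m = {M. \<forall>i j. (i \<notin> {1..m} \<or> j \<notin> {1..m}) \<longrightarrow> M i j = 0}"

definition mat_app :: "nat \<Rightarrow> (nat \<Rightarrow> nat \<Rightarrow> 'a::field) \<Rightarrow> (nat \<Rightarrow> 'a) \<Rightarrow> (nat \<Rightarrow> 'a)" where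
  "mat_app m M u = (\<lambda>i. \<Sum>j\<in>{1..m}. M i j * u j)"

definition mat_mul :: "nat \<Rightarrow> (nat \<Rightarrow> nat \<Rightarrow> 'a::field) \<Rightarrow> (nat \<Rightarrow> nat \<Rightarrow> 'a) \<Rightarrow> (nat \<Rightarrow> nat \<Rightarrow> 'a)" where
  "mat_mul m M N = (\<lambda>i j. \<Sum>k\<in>{1..m}. M i k * N k j)"

definition Theta :: "nat \<Rightarrow> nat \<Rightarrow> (nat \<Rightarrow> nat \<Rightarrow> 'a::field) \<Rightarrow> 'a" where
  "Theta d m us =
     (\<Sum>I \<in> {I \<in> PiE {..<d} (\<lambda>_. {1..m}). (\<Sum>j<d. I j) = (d - 1) * m + 1}.
        \<Prod>j<d. us j (I j))"

definition Lie :: "nat \<Rightarrow> nat \<Rightarrow> (nat \<Rightarrow> nat \<Rightarrow> 'a::field) set" where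
  "Lie m d = {L \<in> glm m. \<forall>us. (\<forall>j<d. us j \<in> Vm m) \<longrightarrow>
       (\<Sum>i<d. Theta d m (us(i := mat_app m L (us i)))) = 0}"

definition Dm :: "nat \<Rightarrow> nat \<Rightarrow> (nat \<Rightarrow> nat \<Rightarrow> 'a::field)" where
  "Dm m d = (\<lambda>i j. if i = j \<and> i \<in> {1..m}
                    then of_int (int m - 1 - int d * (int m - int i)) else 0)"

definition iota_mat :: "nat \<Rightarrow> (nat \<Rightarrow> nat \<Rightarrow> 'a::field)" where
  "iota_mat n = (\<lambda>i j. if i = j \<and> j \<in> {1..n} then 1 else 0)"

definition pi_mat :: "nat \<Rightarrow> (nat \<Rightarrow> nat \<Rightarrow> 'a::field)" where
  "pi_mat n = (\<lambda>i j. if j \<in> {2..n+1} \<and> i = j - 1 then 1 else 0)"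

definition rho :: "nat \<Rightarrow> (nat \<Rightarrow> nat \<Rightarrow> 'a::field) \<Rightarrow> (nat \<Rightarrow> nat \<Rightarrow> 'a)" where
  "rho n f = mat_mul n (iota_mat n) (mat_mul n f (pi_mat n))"

definition mscale :: "'a::field \<Rightarrow> (nat \<Rightarrow> nat \<Rightarrow> 'a) \<Rightarrow> (nat \<Rightarrow> nat \<Rightarrow> 'a)" where
  "mscale c M = (\<lambda>i j. c * M i j)"

end

theory Submission
  imports Defs
begin

text \<open>Write \<open>S = (d - 1) m + 1\<close>. Expanding \<open>\<Theta>\<^sub>d\<close> multilinearly, \<open>L\<close> lies in
  \<open>L(m, d)\<close> iff for every \<open>J \<in> {1..m}\<^sup>d\<close> the coefficient \<open>\<Sum>\<^sub>i L(J\<^sub>i + S - \<Sum>J, J\<^sub>i)\<close>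
  of the monomial \<open>\<Prod>\<^sub>j u\<^sub>j(J\<^sub>j)\<close> vanishes. Each such equation only involves the diagonal of
  \<open>L\<close> of offset \<open>t = S - \<Sum>J\<close>; for \<open>J = (x, y, z, m, \<dots>, m)\<close> it reads
  \<open>G x + G y + G z + (d - 3) G m = 0\<close> whenever \<open>x + y + z + t = 2m + 1\<close>, where \<open>G\<close> is that
  diagonal. Moving \<open>x\<close> by one shows that \<open>G\<close> has constant differences, and the case
  \<open>z = m\<close> then pins \<open>G\<close> down: diagonals below the main one vanish, and the entry \<open>(i, j)\<close>,
  \<open>i \<le> j\<close>, equals \<open>f(j - i) (i + (d - 1)(j - m) - 1)\<close> for a scalar \<open>f(j - i)\<close>. Conversely
  all such matrices lie in \<open>L(m, d)\<close>. The weight vanishes at \<open>(1, m)\<close>, so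
  \<open>f(0), \<dots>, f(m - 2)\<close> are free coordinates; \<open>\<rho>\<close> shifts \<open>f\<close> by one place and \<open>D\<^sub>m\<close> is
  the matrix with \<open>f = \<delta>\<^sub>0\<close>.\<close>

lemma sum_fun_apply: "sum F A x = (\<Sum>y\<in>A. F y x)"
  by (induction A rule: infinite_finite_induct) auto

lemma sum_fun_upd_add:
  fixes I :: "'a \<Rightarrow> 'b::comm_monoid_add"
  assumes "finite A" and "i \<in> A"
  shows "sum (I(i := l)) A + I i = sum I A + l"
proof -
  have "sum (I(i := l)) (A - {i}) = sum I (A - {i})"
    by (rule sum.cong) auto
  then show ?thesis
    using assms by (simp add: sum.remove[of A i] ac_simps)
qed

lemma bij_betw_swap_coordinate:
  assumes "i \<in> K"
  shows "bij_betw (\<lambda>(I, l). (I(i := l), I i)) (PiE K (\<lambda>_. B) \<times> B) (PiE K (\<lambda>_. B) \<times> B)"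
  by (rule bij_betwI[where g = "\<lambda>(I, l). (I(i := l), I i)"])
    (use assms in \<open>auto simp: PiE_iff extensional_def\<close>)

lemma glm_entry_diff_eq_sum:
  fixes L :: "nat \<Rightarrow> nat \<Rightarrow> 'a::field"
  assumes "L \<in> glm m"
  shows "L (q + S - T) r = (\<Sum>p\<in>{1..m}. if T + p = S + q then L p r else 0)"
proof -
  have "(\<Sum>p\<in>{1..m}. if T + p = S + q then L p r else 0)
      = (\<Sum>p\<in>{1..m}. if T \<le> q + S \<and> p = q + S - T then L p r else 0)"
    by (rule sum.cong) auto
  also have "\<dots> = (if T \<le> q + S \<and> q + S - T \<in> {1..m} then L (q + S - T) r else 0)"
    by (auto simp: sum.delta')
  also have "\<dots> = L (q + S - T) r"
    using assms by (auto simp: glm_def)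
  finally show ?thesis ..
qed

text \<open>If \<open>J i + ((d - 1) * m + 1) < sum J\<close>, the truncated subtraction selects row \<open>0\<close>,
  where every matrix of \<open>glm m\<close> vanishes.\<close>

definition lie_coeff :: "nat \<Rightarrow> nat \<Rightarrow> (nat \<Rightarrow> nat \<Rightarrow> 'a::field) \<Rightarrow> (nat \<Rightarrow> nat) \<Rightarrow> 'a" where
  "lie_coeff m d L J = (\<Sum>i<d. L (J i + ((d - 1) * m + 1) - sum J {..<d}) (J i))"

lemma Theta_update_expand:
  fixes L :: "nat \<Rightarrow> nat \<Rightarrow> 'a::field"
  assumes L: "L \<in> glm m" and i: "i < d"
  shows "Theta d m (us(i := mat_app m L (us i))) =
    (\<Sum>J\<in>PiE {..<d} (\<lambda>_. {1..m}).
       (\<Prod>j<d. us j (J j)) * L (J i + ((d - 1) * m + 1) - sum J {..<d}) (J i))"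
proof -
  define A where "A = PiE {..<d} (\<lambda>_. {1..m})"
  define S where "S = (d - 1) * m + 1"
  define P where "P I = (\<Prod>j\<in>{..<d} - {i}. us j (I j))" for I :: "nat \<Rightarrow> nat"
  define g where "g = (\<lambda>(J, p). if sum J {..<d} + p = S + J i then L p (J i) * us i (J i) * P J else 0)"
  have prod_split: "(\<Prod>j<d. F j) = F i * (\<Prod>j\<in>{..<d} - {i}. F j)" for F :: "nat \<Rightarrow> 'a"
    using i by (simp add: prod.remove[of _ i])
  have "Theta d m (us(i := mat_app m L (us i))) =
     (\<Sum>I\<in>A. if sum I {..<d} = S then (\<Prod>j<d. (us(i := mat_app m L (us i))) j (I j)) else 0)"
    unfolding Theta_def A_def S_def by (subst sum.inter_filter) (auto intro: finite_PiE)
  also have "\<dots> = (\<Sum>I\<in>A. \<Sum>l\<in>{1..m}. if sum I {..<d} = S then L (I i) l * us i l * P I else 0)"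
    by (intro sum.cong refl, subst prod_split)
      (auto simp: P_def mat_app_def sum_distrib_right intro!: prod.cong)
  also have "\<dots> = (\<Sum>(I, l)\<in>A \<times> {1..m}. if sum I {..<d} = S then L (I i) l * us i l * P I else 0)"
    by (rule sum.cartesian_product)
  also have "\<dots> = (\<Sum>x\<in>A \<times> {1..m}. g ((\<lambda>(I, l). (I(i := l), I i)) x))"
  proof (intro sum.cong refl, clarify)
    fix I l
    have "(sum (I(i := l)) {..<d} + I i = S + l) = (sum I {..<d} = S)"
      using sum_fun_upd_add[of "{..<d}" i I l] i by simp
    moreover have "P (I(i := l)) = P I"
      unfolding P_def by (intro prod.cong) auto
    ultimately show "(if sum I {..<d} = S then L (I i) l * us i l * P I else 0)
        = g (I(i := l), I i)"
      unfolding g_def by simp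
  qed
  also have "\<dots> = sum g (A \<times> {1..m})"
    unfolding A_def by (rule sum.reindex_bij_betw[OF bij_betw_swap_coordinate]) (use i in simp)
  also have "\<dots> = (\<Sum>J\<in>A. \<Sum>p\<in>{1..m}. g (J, p))"
    by (simp add: sum.cartesian_product)
  also have "\<dots> = (\<Sum>J\<in>A. (\<Prod>j<d. us j (J j)) * L (J i + S - sum J {..<d}) (J i))"
    by (intro sum.cong refl, subst prod_split, subst glm_entry_diff_eq_sum[OF L])
      (simp add: g_def P_def sum_distrib_left if_distrib mult_ac cong: if_cong)
  finally show ?thesis unfolding A_def S_def .
qed

lemma Lie_defining_sum_expand:
  fixes L :: "nat \<Rightarrow> nat \<Rightarrow> 'a::field"
  assumes "L \<in> glm m"
  shows "(\<Sum>i<d. Theta d m (us(i := mat_app m L (us i)))) =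
    (\<Sum>J\<in>PiE {..<d} (\<lambda>_. {1..m}). (\<Prod>j<d. us j (J j)) * lie_coeff m d L J)"
  using assms by (simp add: Theta_update_expand lie_coeff_def sum_distrib_left sum.swap[of _ "{..<d}"])

lemma prod_PiE_coordinate_indicator:
  assumes "finite K" and "J \<in> PiE K B" and "J0 \<in> PiE K B"
  shows "(\<Prod>j\<in>K. if J j = J0 j then 1 else 0) = (if J = J0 then 1 else (0::'a::comm_semiring_1))"
proof (cases "J = J0")
  case False
  then obtain k where "k \<in> K" "J k \<noteq> J0 k"
    using assms PiE_ext by metis
  then show ?thesis
    using assms(1) False by (auto intro!: prod_zero)
qed simp

lemma Lie_iff_lie_coeff:
  fixes L :: "nat \<Rightarrow> nat \<Rightarrow> 'a::field"
  shows "L \<in> Lie m d \<longleftrightarrow> L \<in> glm m \<and> (\<forall>J\<in>PiE {..<d} (\<lambda>_. {1..m}). lie_coeff m d L J = 0)"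
proof safe
  assume "L \<in> glm m" and "\<forall>J\<in>PiE {..<d} (\<lambda>_. {1..m}). lie_coeff m d L J = 0"
  then show "L \<in> Lie m d"
    by (simp add: Lie_def Lie_defining_sum_expand)
next
  assume L: "L \<in> Lie m d"
  then show glm: "L \<in> glm m"
    by (simp add: Lie_def)
  fix J0 assume J0: "J0 \<in> PiE {..<d} (\<lambda>_. {1..m})"
  define us where "us j k = (if k = J0 j then 1 else 0 :: 'a)" for j k
  have "\<forall>j<d. us j \<in> Vm m"
    using J0 by (auto simp: us_def Vm_def PiE_iff)
  then have "0 = (\<Sum>J\<in>PiE {..<d} (\<lambda>_. {1..m}). (\<Prod>j<d. us j (J j)) * lie_coeff m d L J)"
    using L by (simp add: Lie_def Lie_defining_sum_expand[OF glm])
  also have "\<dots> = (\<Sum>J\<in>PiE {..<d} (\<lambda>_. {1..m}). if J = J0 then lie_coeff m d L J else 0)"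
    using J0 by (intro sum.cong refl) (simp add: us_def prod_PiE_coordinate_indicator)
  also have "\<dots> = lie_coeff m d L J0"
    using J0 by (simp add: sum.delta' finite_PiE)
  finally show "lie_coeff m d L J0 = 0" ..
qed

section \<open>Linear relations along a diagonal\<close>

definition diag_entry :: "nat \<Rightarrow> (nat \<Rightarrow> nat \<Rightarrow> 'a::field) \<Rightarrow> int \<Rightarrow> nat \<Rightarrow> 'a" where
  "diag_entry m L t q = (if 1 \<le> int q + t \<and> int q + t \<le> int m then L (nat (int q + t)) q else 0)"

lemma glm_entry_eq_diag_entry:
  fixes L :: "nat \<Rightarrow> nat \<Rightarrow> 'a::field"
  assumes "L \<in> glm m" and "int S - int T = t"
  shows "L (q + S - T) q = diag_entry m L t q"
proof (cases "T \<le> q + S")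
  case True
  then have "int q + t = int (q + S - T)"
    using assms(2) by simp
  then show ?thesis
    using assms(1) by (auto simp: diag_entry_def glm_def)
next
  case False
  then show ?thesis
    using assms by (auto simp: diag_entry_def glm_def)
qed

lemma sum_lessThan_split3:
  fixes d :: nat
  assumes "3 \<le> d"
  shows "(\<Sum>k<d. g k) = g 0 + g 1 + g 2 + (\<Sum>k\<in>{3..<d}. g k)"
proof -
  have "{..<d} = insert 0 (insert 1 (insert 2 {3..<d}))"
    using assms by auto
  then show ?thesis
    by (simp add: add.assoc)
qed

lemma Lie_diag_relation:
  fixes L :: "nat \<Rightarrow> nat \<Rightarrow> 'a::field"
  assumes L: "L \<in> Lie m d" and d: "3 \<le> d"
    and xyz: "x \<in> {1..m}" "y \<in> {1..m}" "z \<in> {1..m}"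
    and t: "int x + int y + int z + t = 2 * int m + 1"
  shows "diag_entry m L t x + diag_entry m L t y + diag_entry m L t z
    + of_nat (d - 3) * diag_entry m L t m = 0"
proof -
  define J where "J k = (if k < d then (if k = 0 then x else if k = 1 then y else if k = 2 then z else m)
    else undefined)" for k
  have J: "J \<in> PiE {..<d} (\<lambda>_. {1..m})"
    using xyz by (auto simp: J_def PiE_iff extensional_def)
  have sum_J: "sum J {..<d} = x + y + z + (d - 3) * m"
    using d by (simp add: sum_lessThan_split3 J_def)
  have offset: "int ((d - 1) * m + 1) - int (sum J {..<d}) = t"
  proof -
    obtain r where "d = 3 + r"
      using d le_iff_add by blast
    then show ?thesis
      unfolding sum_J using t by (simp add: algebra_simps)
  qed
  have "0 = lie_coeff m d L J"
    using L J by (simp add: Lie_iff_lie_coeff)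
  also have "\<dots> = (\<Sum>k<d. diag_entry m L t (J k))"
    using L unfolding lie_coeff_def Lie_iff_lie_coeff
    by (intro sum.cong refl glm_entry_eq_diag_entry offset) auto
  also have "\<dots> = diag_entry m L t x + diag_entry m L t y + diag_entry m L t z
      + of_nat (d - 3) * diag_entry m L t m"
    using d by (simp add: sum_lessThan_split3 J_def)
  finally show ?thesis ..
qed

locale diagonal_relation =
  fixes G :: "nat \<Rightarrow> 'a::field_char_0" and m d :: nat and t :: int
  assumes relation: "\<And>x y z. x \<in> {1..m} \<Longrightarrow> y \<in> {1..m} \<Longrightarrow> z \<in> {1..m} \<Longrightarrow>
      int x + int y + int z + t = 2 * int m + 1 \<Longrightarrow> G x + G y + G z + of_nat (d - 3) * G m = 0"
    and d: "3 \<le> d" and m: "2 \<le> m"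
begin

lemma diff_Suc_eq_top_diff:
  assumes x: "1 \<le> x" "x \<le> m - 1" and y: "y \<in> {1..m}" and xy: "int x + int y + t = int m + 1"
  shows "G (x + 1) - G x = G m - G (m - 1)"
proof -
  have "G x + G y + G m + of_nat (d - 3) * G m = 0"
    using x y xy m by (intro relation) auto
  moreover have "G (x + 1) + G y + G (m - 1) + of_nat (d - 3) * G m = 0"
    using x y xy m by (intro relation) auto
  moreover have "G (x + 1) - G x = (G (x + 1) + G y + G (m - 1) + of_nat (d - 3) * G m)
      - (G x + G y + G m + of_nat (d - 3) * G m) + (G m - G (m - 1))"
    by (simp add: algebra_simps)
  ultimately show ?thesis
    by simp
qed

lemma two_term_relation:
  assumes "x \<in> {1..m}" and "y \<in> {1..m}" and "int x + int y + t = int m + 1"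
  shows "G x + G y + of_nat (d - 2) * G m = 0"
proof -
  have "of_nat (d - 2) = (1 + of_nat (d - 3) :: 'a)"
    using d by (simp add: of_nat_diff)
  moreover have "G x + G y + G m + of_nat (d - 3) * G m = 0"
    using assms m by (intro relation) auto
  ultimately show ?thesis
    by (simp add: algebra_simps)
qed

lemma vanishes_if_pos_offset:
  fixes \<tau> :: nat
  assumes t: "t = int \<tau>" "1 \<le> \<tau>"
    and beyond: "\<And>q. m < q + \<tau> \<Longrightarrow> G q = 0"
    and q: "1 \<le> q" "q + \<tau> \<le> m"
  shows "G q = 0"
proof -
  define hi where "hi = m + 1 - \<tau>"
  define \<gamma> where "\<gamma> = G (m - 1)"
  have \<tau>: "\<tau> \<le> m - 1"
    using q by simp
  have "G m = 0"
    using beyond t by simp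
  have step: "G x = G (x + 1) + \<gamma>" if "1 \<le> x" "x + \<tau> \<le> m" for x
  proof -
    have "G (x + 1) - G x = G m - G (m - 1)"
      using that t by (intro diff_Suc_eq_top_diff[where y = "m + 1 - \<tau> - x"]) auto
    then show ?thesis
      using \<open>G m = 0\<close> by (simp add: \<gamma>_def algebra_simps)
  qed
  have linear: "G (hi - k) = of_nat k * \<gamma>" if "k \<le> hi - 1" for k
    using that
  proof (induction k)
    case 0
    then show ?case
      using beyond \<tau> by (simp add: hi_def)
  next
    case (Suc k)
    have "G (hi - Suc k) = G (hi - Suc k + 1) + \<gamma>"
      using Suc.prems \<tau> by (intro step) (auto simp: hi_def)
    also have "hi - Suc k + 1 = hi - k"
      using Suc.prems by simp
    finally show ?case
      using Suc by (simp add: algebra_simps)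
  qed
  have "G 1 + G (m - \<tau>) + of_nat (d - 2) * G m = 0"
    using \<tau> t by (intro two_term_relation) auto
  moreover have "G 1 = of_nat (m - \<tau>) * \<gamma>"
    using linear[of "hi - 1"] \<tau> by (simp add: hi_def)
  moreover have "G (m - \<tau>) = \<gamma>"
    using linear[of 1] \<tau> m by (simp add: hi_def)
  ultimately have "of_nat (m - \<tau> + 1) * \<gamma> = 0"
    using \<open>G m = 0\<close> by (simp add: algebra_simps)
  then have "\<gamma> = 0"
    by (simp del: of_nat_Suc)
  moreover have "G q = of_nat (hi - q) * \<gamma>"
    using linear[of "hi - q"] q by (simp add: hi_def)
  ultimately show ?thesis
    by simp
qed

lemma affine_if_nonpos_offset:
  fixes s :: nat
  assumes t: "t = - int s" and s: "s \<le> m - 1" and q: "1 + s \<le> q" "q \<le> m"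
  shows "G q = (G m - G (m - 1)) / of_nat d * of_int (int q - int s + (int d - 1) * (int q - int m) - 1)"
proof -
  define \<delta> where "\<delta> = G m - G (m - 1)"
  have step: "G x = G (x + 1) - \<delta>" if "1 + s \<le> x" "x \<le> m - 1" for x
  proof -
    have "G (x + 1) - G x = G m - G (m - 1)"
      using that t s by (intro diff_Suc_eq_top_diff[where y = "m + 1 + s - x"]) auto
    then show ?thesis
      by (simp add: \<delta>_def algebra_simps)
  qed
  have linear: "G (m - k) = G m - of_nat k * \<delta>" if "k \<le> m - 1 - s" for k
    using that
  proof (induction k)
    case (Suc k)
    then have "G (m - Suc k) = G (m - k) - \<delta>"
      using step[of "m - Suc k"] by (simp add: Suc_diff_Suc)
    then show ?case
      using Suc by (simp add: algebra_simps)
  qed simp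
  have "G (1 + s) + G m + of_nat (d - 2) * G m = 0"
    using s t m by (intro two_term_relation) auto
  then have "G (1 + s) = - (G m + of_nat (d - 2) * G m)"
    by (simp only: add.assoc eq_neg_iff_add_eq_0)
  moreover have "of_nat d = (2 + of_nat (d - 2) :: 'a)"
    using d by (simp add: of_nat_diff)
  ultimately have "of_nat d * G m = G m - G (1 + s)"
    by (simp add: algebra_simps)
  also have "\<dots> = of_int (int m - 1 - int s) * \<delta>"
    using linear[of "m - 1 - s"] s m by (simp add: Suc_diff_Suc of_nat_diff)
  finally have top: "of_nat d * G m = of_int (int m - 1 - int s) * \<delta>" .
  have Gq: "G q = G m - of_int (int m - int q) * \<delta>"
    using linear[of "m - q"] q by (simp add: of_nat_diff)
  have "of_nat d * G q = of_nat d * G m - of_nat d * of_int (int m - int q) * \<delta>"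
    unfolding Gq by (simp add: right_diff_distrib mult.assoc)
  also have "\<dots> = of_nat d * (\<delta> / of_nat d * of_int (int q - int s + (int d - 1) * (int q - int m) - 1))"
    using d unfolding top by (simp add: field_simps)
  finally show ?thesis
    using d by (subst (asm) mult_left_cancel) (auto simp: \<delta>_def)
qed

end

section \<open>Explicit description of \<open>Lie m d\<close>\<close>

definition lie_mat :: "nat \<Rightarrow> nat \<Rightarrow> (nat \<Rightarrow> 'a::field) \<Rightarrow> nat \<Rightarrow> nat \<Rightarrow> 'a" where
  "lie_mat m d f = (\<lambda>i j. if 1 \<le> i \<and> i \<le> j \<and> j \<le> m
      then f (j - i) * of_int (int i + (int d - 1) * (int j - int m) - 1) else 0)"

lemma Lie_subset_range_lie_mat:
  fixes L :: "nat \<Rightarrow> nat \<Rightarrow> 'a::field_char_0"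
  assumes L: "L \<in> Lie m d" and d: "3 \<le> d" and m: "2 \<le> m"
  shows "L \<in> range (lie_mat m d)"
proof -
  have glm: "L \<in> glm m"
    using L by (simp add: Lie_def)
  have rel: "diagonal_relation (diag_entry m L t) m d t" for t
    by unfold_locales (use Lie_diag_relation[OF L d] d m in auto)
  define f where "f s = (diag_entry m L (- int s) m - diag_entry m L (- int s) (m - 1)) / of_nat d" for s
  have "L i j = lie_mat m d f i j" for i j
  proof (cases "i \<in> {1..m} \<and> j \<in> {1..m}")
    case False
    then show ?thesis
      using glm by (auto simp: glm_def lie_mat_def)
  next
    case ij: True
    show ?thesis
    proof (cases "j < i")
      case below: True
      have "diag_entry m L (int (i - j)) j = 0"
        by (rule diagonal_relation.vanishes_if_pos_offset[OF rel, of _ "i - j"])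
          (use ij below in \<open>auto simp: diag_entry_def\<close>)
      then show ?thesis
        using ij below by (simp add: diag_entry_def lie_mat_def)
    next
      case above: False
      have "diag_entry m L (- int (j - i)) j
          = f (j - i) * of_int (int j - int (j - i) + (int d - 1) * (int j - int m) - 1)"
        unfolding f_def
        by (rule diagonal_relation.affine_if_nonpos_offset[OF rel]) (use ij above in auto)
      then show ?thesis
        using ij above by (simp add: diag_entry_def lie_mat_def of_nat_diff)
    qed
  qed
  then show ?thesis
    by blast
qed

lemma lie_mat_shifted_entry:
  assumes q: "q \<in> {1..m}" and T: "T \<le> q + (d - 1) * m" and d: "1 \<le> d"
  shows "lie_mat m d f (q + ((d - 1) * m + 1) - T) q =
    (if (d - 1) * m + 1 \<le> T then f (T - ((d - 1) * m + 1)) * of_int (int d * int q - int T) else 0)"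
proof -
  have "int (q + ((d - 1) * m + 1) - T) = int q + (int d - 1) * int m + 1 - int T"
    using T d by (simp add: of_nat_diff)
  then have "int (q + ((d - 1) * m + 1) - T) + (int d - 1) * (int q - int m) - 1 = int d * int q - int T"
    by (simp add: algebra_simps)
  then show ?thesis
    using q T by (simp only: lie_mat_def) auto
qed

lemma lie_mat_in_Lie:
  fixes f :: "nat \<Rightarrow> 'a::field"
  assumes d: "1 \<le> d"
  shows "lie_mat m d f \<in> Lie m d"
  unfolding Lie_iff_lie_coeff
proof (intro conjI ballI)
  show "lie_mat m d f \<in> glm m"
    by (auto simp: lie_mat_def glm_def)
  fix J assume J: "J \<in> PiE {..<d} (\<lambda>_. {1..m})"
  define S where "S = (d - 1) * m + 1"
  define T where "T = sum J {..<d}"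
  have bound: "T \<le> J i + (d - 1) * m" if i: "i < d" for i
  proof -
    have "sum J ({..<d} - {i}) \<le> card ({..<d} - {i}) * m"
      using sum_bounded_above[of "{..<d} - {i}" J m] J by (auto simp: PiE_iff)
    then show ?thesis
      using i by (simp add: T_def sum.remove[of _ i])
  qed
  have "lie_coeff m d (lie_mat m d f) J
      = (\<Sum>i<d. if S \<le> T then f (T - S) * of_int (int d * int (J i) - int T) else 0)"
    unfolding lie_coeff_def S_def T_def using J d bound
    by (intro sum.cong refl, subst lie_mat_shifted_entry) (auto simp: PiE_iff T_def)
  also have "\<dots> = (if S \<le> T then f (T - S) * of_int (\<Sum>i<d. int d * int (J i) - int T) else 0)"
    by (simp add: of_int_sum sum_distrib_left del: of_int_diff of_int_mult)
  also have "(\<Sum>i<d. int d * int (J i) - int T) = 0"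
    by (simp add: sum_subtractf T_def of_nat_sum sum_distrib_left)
  finally show "lie_coeff m d (lie_mat m d f) J = 0"
    by simp
qed

lemma Lie_eq_range_lie_mat:
  assumes "3 \<le> d" and "2 \<le> m"
  shows "(Lie m d :: (nat \<Rightarrow> nat \<Rightarrow> 'a::field_char_0) set) = range (lie_mat m d)"
  using assms Lie_subset_range_lie_mat lie_mat_in_Lie by fastforce

section \<open>The shift \<open>rho\<close> and the derivation \<open>Dm\<close>\<close>

lemma mat_mul_pi_mat:
  "mat_mul n A (pi_mat n) i j = (if j \<in> {2..n+1} then A i (j - 1) else 0)"
  by (auto simp: mat_mul_def pi_mat_def if_distrib[of "(*) _"] sum.delta' cong: if_cong)

lemma mat_mul_iota_mat:
  "mat_mul n (iota_mat n) B i j = (if i \<in> {1..n} then B i j else 0)"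
  by (auto simp: mat_mul_def iota_mat_def if_distrib[of "\<lambda>x. x * _"] sum.delta cong: if_cong)

lemma rho_apply:
  "rho n A i j = (if i \<in> {1..n} \<and> j \<in> {2..n+1} then A i (j - 1) else 0)"
  by (simp add: rho_def mat_mul_iota_mat mat_mul_pi_mat)

lemma lie_mat_add_scale:
  "(\<lambda>i j. lie_mat m d f i j + c * lie_mat m d g i j) = lie_mat m d (\<lambda>s. f s + c * g s)"
  by (simp add: lie_mat_def fun_eq_iff algebra_simps)

lemma rho_lie_mat: "rho n (lie_mat n d f) = lie_mat (n + 1) d (case_nat 0 f)"
proof (intro ext)
  fix i j
  show "rho n (lie_mat n d f) i j = lie_mat (n + 1) d (case_nat 0 f) i j"
  proof (cases "1 \<le> i \<and> i < j \<and> j \<le> n + 1")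
    case True
    have "int (j - 1) - int n = int j - int (n + 1)"
      using True by simp
    moreover have "j - i = Suc (j - 1 - i)"
      using True by arith
    then have "case_nat 0 f (j - i) = f (j - 1 - i)"
      by simp
    moreover have "1 \<le> i \<and> i \<le> j - 1 \<and> j - 1 \<le> n"
      using True by arith
    ultimately show ?thesis
      using True by (simp add: rho_apply lie_mat_def)
  qed (auto simp: rho_apply lie_mat_def)
qed

lemma Dm_eq_lie_mat: "Dm m d = lie_mat m d (\<lambda>s. of_bool (s = 0))"
proof -
  have weight: "int m - 1 - int d * (int m - int i) = int i + (int d - 1) * (int i - int m) - 1" for i
    by (simp add: algebra_simps)
  show ?thesis
    unfolding Dm_def lie_mat_def weight by (intro ext) auto
qed

lemma rho_lie_mat_add_Dm:
  "(\<lambda>i j. rho n (lie_mat n d f) i j + c * Dm (n + 1) d i j) = lie_mat (n + 1) d (case_nat c f)"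
  unfolding rho_lie_mat Dm_eq_lie_mat lie_mat_add_scale
  by (rule arg_cong[where f = "lie_mat (n + 1) d"]) (auto split: nat.split)

lemma Lie_Suc_eq_rho_plus_Dm:
  assumes "3 \<le> d" and "2 \<le> n"
  shows "(Lie (n + 1) d :: (nat \<Rightarrow> nat \<Rightarrow> 'a::field_char_0) set)
    = {(\<lambda>i j. A i j + c * Dm (n + 1) d i j) | A c. A \<in> rho n ` Lie n d}"
proof (intro equalityI subsetI)
  fix L :: "nat \<Rightarrow> nat \<Rightarrow> 'a"
  assume "L \<in> Lie (n + 1) d"
  then obtain f where "L = lie_mat (n + 1) d f"
    using assms Lie_eq_range_lie_mat[of d "n + 1"] by auto
  also have "f = case_nat (f 0) (\<lambda>s. f (Suc s))"
    by (auto split: nat.split)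
  finally have "L = (\<lambda>i j. rho n (lie_mat n d (\<lambda>s. f (Suc s))) i j + f 0 * Dm (n + 1) d i j)"
    by (simp only: rho_lie_mat_add_Dm)
  then show "L \<in> {(\<lambda>i j. A i j + c * Dm (n + 1) d i j) | A c. A \<in> rho n ` Lie n d}"
    using assms by (auto simp: Lie_eq_range_lie_mat)
next
  fix L :: "nat \<Rightarrow> nat \<Rightarrow> 'a"
  assume "L \<in> {(\<lambda>i j. A i j + c * Dm (n + 1) d i j) | A c. A \<in> rho n ` Lie n d}"
  then obtain f c where "L = (\<lambda>i j. rho n (lie_mat n d f) i j + c * Dm (n + 1) d i j)"
    using assms by (auto simp: Lie_eq_range_lie_mat)
  then show "L \<in> Lie (n + 1) d"
    unfolding rho_lie_mat_add_Dm using assms by (simp add: Lie_eq_range_lie_mat)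
qed

lemma rho_eq_scaled_Dm_imp_zero:
  fixes A :: "nat \<Rightarrow> nat \<Rightarrow> 'a::field_char_0"
  assumes "1 \<le> n" and "2 \<le> d" and "rho n A = mscale c (Dm (n + 1) d)"
  shows "c = 0"
proof -
  have "rho n A 1 1 = 0"
    by (simp add: rho_apply)
  then have "mscale c (Dm (n + 1) d) 1 1 = 0"
    unfolding assms(3) .
  moreover have "mscale c (Dm (n + 1) d) 1 1 = - c * of_int (int n * (int d - 1))"
    by (simp add: mscale_def Dm_def algebra_simps)
  ultimately show ?thesis
    using assms(1,2) by simp
qed

lemma rho_Lie_inter_Dm_line:
  assumes "2 \<le> d" and "1 \<le> n"
  shows "rho n ` (Lie n d :: (nat \<Rightarrow> nat \<Rightarrow> 'a::field_char_0) set) \<inter> {mscale c (Dm (n + 1) d) | c. True}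
    = {(\<lambda>i j. 0)}"
proof (intro equalityI subsetI)
  fix L :: "nat \<Rightarrow> nat \<Rightarrow> 'a"
  assume "L \<in> rho n ` Lie n d \<inter> {mscale c (Dm (n + 1) d) | c. True}"
  then obtain A c where "L = rho n A" and "L = mscale c (Dm (n + 1) d)"
    by blast
  with assms have "c = 0"
    using rho_eq_scaled_Dm_imp_zero by metis
  then show "L \<in> {(\<lambda>i j. 0)}"
    using \<open>L = mscale c (Dm (n + 1) d)\<close> by (simp add: mscale_def fun_eq_iff)
next
  fix L :: "nat \<Rightarrow> nat \<Rightarrow> 'a"
  assume "L \<in> {(\<lambda>i j. 0)}"
  moreover have "(\<lambda>i j. 0) = rho n (lie_mat n d (\<lambda>_. 0))"
    by (simp add: rho_apply lie_mat_def fun_eq_iff)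
  moreover have "lie_mat n d (\<lambda>_. 0) \<in> (Lie n d :: (nat \<Rightarrow> nat \<Rightarrow> 'a) set)"
    using assms by (intro lie_mat_in_Lie) simp
  moreover have "(\<lambda>i j. 0) = mscale 0 (Dm (n + 1) d)"
    by (simp add: mscale_def fun_eq_iff)
  ultimately show "L \<in> rho n ` Lie n d \<inter> {mscale c (Dm (n + 1) d) | c. True}"
    by blast
qed

section \<open>Dimension\<close>

interpretation matrix_space: vector_space "mscale :: 'a::field \<Rightarrow> (nat \<Rightarrow> nat \<Rightarrow> 'a) \<Rightarrow> _"
  by unfold_locales (simp_all add: mscale_def fun_eq_iff algebra_simps)

lemma lie_mat_scale: "lie_mat m d (\<lambda>s. c * f s) = mscale c (lie_mat m d f)"
  by (simp add: lie_mat_def mscale_def fun_eq_iff)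

lemma lie_mat_sum: "lie_mat m d (\<lambda>s. \<Sum>k\<in>K. g k s) = (\<Sum>k\<in>K. lie_mat m d (g k))"
  by (auto simp: lie_mat_def sum_fun_apply sum_distrib_right fun_eq_iff)

lemma lie_mat_cong:
  assumes "\<And>s. s < m - 1 \<Longrightarrow> f s = g s"
  shows "lie_mat m d f = lie_mat m d g"
proof (intro ext)
  fix i j
  show "lie_mat m d f i j = lie_mat m d g i j"
  proof (cases "1 \<le> i \<and> i \<le> j \<and> j \<le> m \<and> m - 1 \<le> j - i")
    case True
    then have "i = 1" and "j = m"
      by auto
    then show ?thesis
      by (simp add: lie_mat_def)
  qed (auto simp: lie_mat_def assms)
qed

lemma lie_mat_first_row:
  "s < m \<Longrightarrow> lie_mat m d f 1 (Suc s) = f s * of_int ((int d - 1) * (int s + 1 - int m))"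
  by (simp add: lie_mat_def algebra_simps)

lemma lie_mat_eq_sum_units:
  "lie_mat m d f = (\<Sum>s<m - 1. mscale (f s) (lie_mat m d (\<lambda>r. of_bool (r = s))))"
proof -
  have "lie_mat m d f = lie_mat m d (\<lambda>r. \<Sum>s<m - 1. f s * of_bool (r = s))"
    by (rule lie_mat_cong) (simp add: of_bool_def if_distrib sum.delta cong: if_cong)
  also have "\<dots> = (\<Sum>s<m - 1. mscale (f s) (lie_mat m d (\<lambda>r. of_bool (r = s))))"
    unfolding lie_mat_sum lie_mat_scale ..
  finally show ?thesis .
qed

lemma dim_Lie:
  assumes d: "3 \<le> d" and m: "2 \<le> m"
  shows "matrix_space.dim (Lie m d :: (nat \<Rightarrow> nat \<Rightarrow> 'a::field_char_0) set) = m - 1"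
proof -
  define E where "E s = (lie_mat m d (\<lambda>r. of_bool (r = s)) :: nat \<Rightarrow> nat \<Rightarrow> 'a)" for s
  have weight: "(of_int ((int d - 1) * (int s' + 1 - int m)) :: 'a) \<noteq> 0" if "s' < m - 1" for s'
    using that d by (simp only: of_int_eq_0_iff) simp
  have first_row: "E s 1 (Suc s') = 0 \<longleftrightarrow> s \<noteq> s'" if "s' < m - 1" for s s'
    unfolding E_def using that weight[OF that] by (subst lie_mat_first_row) auto
  have inj: "inj_on E {..<m - 1}"
  proof (rule inj_onI)
    fix s s' assume "s \<in> {..<m - 1}" and "s' \<in> {..<m - 1}" and "E s = E s'"
    then show "s = s'"
      using first_row[of s s] first_row[of s s'] by auto
  qed
  have "E ` {..<m - 1} \<subseteq> Lie m d"
    using d by (auto simp: E_def intro: lie_mat_in_Lie)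
  moreover have "Lie m d \<subseteq> matrix_space.span (E ` {..<m - 1})"
  proof
    fix L :: "nat \<Rightarrow> nat \<Rightarrow> 'a"
    assume "L \<in> Lie m d"
    then obtain f where "L = lie_mat m d f"
      using Lie_eq_range_lie_mat[OF d m] by blast
    also have "\<dots> = (\<Sum>s<m - 1. mscale (f s) (E s))"
      unfolding E_def by (rule lie_mat_eq_sum_units)
    also have "\<dots> \<in> matrix_space.span (E ` {..<m - 1})"
      by (intro matrix_space.span_sum matrix_space.span_scale matrix_space.span_base) auto
    finally show "L \<in> matrix_space.span (E ` {..<m - 1})" .
  qed
  moreover have "matrix_space.independent (E ` {..<m - 1})"
  proof (rule matrix_space.independent_if_scalars_zero)
    fix g L assume sum: "(\<Sum>L\<in>E ` {..<m - 1}. mscale (g L) L) = 0" and L: "L \<in> E ` {..<m - 1}"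
    then obtain s where s: "s < m - 1" and "L = E s"
      by auto
    have "0 = (\<Sum>L'\<in>E ` {..<m - 1}. g L' * L' 1 (Suc s))"
      using fun_cong[OF fun_cong[OF sum, of 1], of "Suc s"] by (simp add: sum_fun_apply mscale_def)
    also have "\<dots> = g L * L 1 (Suc s) + (\<Sum>L'\<in>E ` {..<m - 1} - {L}. g L' * L' 1 (Suc s))"
      using L by (simp add: sum.remove)
    also have "(\<Sum>L'\<in>E ` {..<m - 1} - {L}. g L' * L' 1 (Suc s)) = 0"
      using first_row[OF s] \<open>L = E s\<close> by (intro sum.neutral) auto
    finally show "g L = 0"
      using first_row[OF s] \<open>L = E s\<close> by simp
  qed simp
  moreover have "card (E ` {..<m - 1}) = m - 1"
    using inj by (simp add: card_image)
  ultimately show ?thesis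
    by (rule matrix_space.dim_unique)
qed

theorem theorem3p11:
  fixes d n :: nat
  assumes "d \<ge> 3" and "n \<ge> 2"
  shows "(Lie (n+1) d :: (nat \<Rightarrow> nat \<Rightarrow> 'a::{alg_closed_field, field_char_0}) set)
           = {(\<lambda>i j. A i j + c * Dm (n+1) d i j) | A c. A \<in> rho n ` Lie n d}
      \<and> rho n ` (Lie n d :: (nat \<Rightarrow> nat \<Rightarrow> 'a) set) \<inter> {mscale c (Dm (n+1) d) | c. True}
           = {(\<lambda>i j. 0)}
      \<and> vector_space.dim mscale (Lie n d :: (nat \<Rightarrow> nat \<Rightarrow> 'a) set) = n - 1"
  using assms
  by (intro conjI Lie_Suc_eq_rho_plus_Dm rho_Lie_inter_Dm_line dim_Lie) simp_all

end
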